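(* Let $t_1,t_{1'},t_2,t_{2'},t_0,t_\infty\in\mathbb{R}$ satisfy $t_1\neq t_2$; $t_0\neq t_\infty,t_1,t_{1'},t_2,t_{2'}$; $t_\infty\neq t_1,t_2$; and \[ \frac{(t_\infty - t_0)(t_1 - t_0)}{(t_1-t_\infty)(t_{1'}-t_0)} = \frac{(t_\infty - t_0)(t_2 - t_0)}{(t_2-t_\infty)(t_{2'}-t_0)}. \] Then there is a constant $A$ depending only on $d$ such that for every set of lines $G$, \[ |G|^4 \leq A\, D_{t_1,t_2}D_{t_0,t_\infty}D_{t_{1'},t_0}D_{t_{2'},t_0}\,\mathcal{M}(G)\sup_{t\in\{t_\infty,t_0,t_1,t_{1'},t_2,t_{2'}\}}\mathcal{L}^{d-1}(\pi_t(G))^7. \]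
   Context: Let $e_1,\ldots,e_d$ be an orthonormal basis of $\mathbb{R}^d$, $H=\mathrm{span}(e_1,\ldots,e_{d-1})\cong\mathbb{R}^{d-1}$, and $H_t=H+te_d$ for $t\in\mathbb{R}$. $\mathcal{L}^m$ denotes Lebesgue measure on $\mathbb{R}^m$. A "set of lines" $G$ is a collection of lines in $\mathbb{R}^d$ each meeting $H$ in exactly one point. For such a line $g$, $\pi_t(g)=H_t\cap g$ (viewed as a point of $H$ after subtracting $te_d$), and $\pi_t(G)=\{\pi_t(g):g\in G\}$. Set $G_X=\{(\xi,x)\in H\times H: \exists g\in G \text{ with } x,\ x+\xi+e_d\in g\}$, $|G|=\mathcal{L}^{2(d-1)}(G_X)$, and $\mathcal{M}(G)=\sup_{\xi\in H}\mathcal{L}^{d-1}(\{x:(\xi,x)\in G_X\})$. For $t\ne t'$, $D_{t,t'}=|t-t'|^{-(d-1)}$. Throughout, sets of lines are assumed to be such that the relevant sets are measurable and $|G|$, $\mathcal{M}(G)$ and all $\mathcal{L}^{d-1}(\pi_t(G))$ are finite. *)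

theory Defs
  imports "HOL-Analysis.Analysis"
begin

(* R^d is modelled as H \<times> R with H = real^'n, so d - 1 = CARD('n) (hence d \<ge> 2).
   The second component is the e_d coordinate; H_t = {(x,t). x \<in> H}. *)

definition is_line :: "'a::euclidean_space set \<Rightarrow> bool" where
  "is_line L \<longleftrightarrow> affine L \<and> aff_dim L = 1"

definition set_of_lines :: "((real^'n) \<times> real) set set \<Rightarrow> bool" where
  "set_of_lines G \<longleftrightarrow> (\<forall>g\<in>G. is_line g \<and> (\<exists>!x. (x, 0) \<in> g))"

definition proj_line :: "real \<Rightarrow> ((real^'n) \<times> real) set \<Rightarrow> real^'n" where
  "proj_line t g = (THE x. (x, t) \<in> g)"

definition proj_lines :: "real \<Rightarrow> ((real^'n) \<times> real) set set \<Rightarrow> (real^'n) set" where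
  "proj_lines t G = proj_line t ` G"

definition lines_X :: "((real^'n) \<times> real) set set \<Rightarrow> ((real^'n) \<times> (real^'n)) set" where
  "lines_X G = {(\<xi>, x). \<exists>g\<in>G. (x, 0) \<in> g \<and> (x + \<xi>, 1) \<in> g}"

definition lines_fibre :: "((real^'n) \<times> real) set set \<Rightarrow> real^'n \<Rightarrow> (real^'n) set" where
  "lines_fibre G \<xi> = {x. (\<xi>, x) \<in> lines_X G}"

definition lines_size :: "((real^'n) \<times> real) set set \<Rightarrow> real" where
  "lines_size G = measure lebesgue (lines_X G)"

text \<open>M(G) = sup over xi of L^{d-1} of the fibre (as an extended real, then converted;
  it is assumed finite in the theorem).\<close>
definition lines_M_ennreal :: "((real^'n) \<times> real) set set \<Rightarrow> ennreal" where
  "lines_M_ennreal G = (SUP \<xi>. emeasure lebesgue (lines_fibre G \<xi>))"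

definition lines_M :: "((real^'n) \<times> real) set set \<Rightarrow> real" where
  "lines_M G = enn2real (lines_M_ennreal G)"

definition Dcoef :: "nat \<Rightarrow> real \<Rightarrow> real \<Rightarrow> real" where
  "Dcoef m t t' = 1 / \<bar>t - t'\<bar> ^ m"

end

theory Submission
  imports Defs
begin

(* Encode a line of G by its direction xi and its point x at time 0, so that its point at time t
   is x + t xi; this gives the set S = G_X of pairs (xi, x), and Q t denotes a Borel set containing
   pi_t(G). Parametrising lines by their points y at time t0 and u at time t1 (Jacobian
   |t1 - t0|^-(d-1)) and applying Cauchy-Schwarz in y, and then in the pair (u, v) of points at
   times t1 and t1', bounds |G|^4 by |Q t0|^2 |Q t1| |Q t1'| times the measure of the
   quadrilaterals y, z (time t0), u (time t1), v (time t1') all four of whose sides lie in S.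
   Keep the side yv and relax the other three sides to their points alpha, beta, gamma at times
   t_inf, t2, t2'. The substitution (u, z, v) to (alpha, beta, gamma) is a chain of three
   homotheties, and the cross-ratio hypothesis says precisely that their ratios combine so that
   v - y depends on (alpha, beta, gamma) only. Hence the direction of yv is determined by
   (alpha, beta, gamma), the integral over y costs at most M(G), and the remaining integrals give
   |Q t_inf| |Q t2| |Q t2'|; collecting the Jacobians gives the four factors D. *)

section \<open>Nonnegative integrals over Euclidean space\<close>

lemma nn_integral_lborel_affine:
  fixes f :: "'a::euclidean_space \<Rightarrow> ennreal" and t :: 'a
  assumes [measurable]: "f \<in> borel_measurable borel" and c: "c \<noteq> 0"
  shows "(\<integral>\<^sup>+x. f x \<partial>lborel) = ennreal (\<bar>c\<bar> ^ DIM('a)) * (\<integral>\<^sup>+x. f (t + c *\<^sub>R x) \<partial>lborel)"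
  by (subst lborel_affine[OF c, of t])
     (simp add: nn_integral_density nn_integral_distr nn_integral_cmult)

lemma nn_integral_lborel_translate:
  fixes f :: "'a::euclidean_space \<Rightarrow> ennreal"
  assumes "f \<in> borel_measurable borel"
  shows "(\<integral>\<^sup>+x. f x \<partial>lborel) = (\<integral>\<^sup>+x. f (c + x) \<partial>lborel)"
  using nn_integral_lborel_affine[OF assms, of 1 c] by simp

lemma lborel_nn_integral_swap:
  fixes f :: "'a::euclidean_space \<Rightarrow> 'b::euclidean_space \<Rightarrow> ennreal"
  assumes "(\<lambda>p. f (fst p) (snd p)) \<in> borel_measurable (borel \<Otimes>\<^sub>M borel)"
  shows "(\<integral>\<^sup>+x. \<integral>\<^sup>+y. f x y \<partial>lborel \<partial>lborel) = (\<integral>\<^sup>+y. \<integral>\<^sup>+x. f x y \<partial>lborel \<partial>lborel)"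
proof -
  have "case_prod f \<in> borel_measurable (lborel \<Otimes>\<^sub>M lborel)"
    using assms by (simp add: split_beta' measurable_cong_sets[OF sets_pair_measure_cong[OF sets_lborel sets_lborel] refl])
  from lborel_pair.Fubini'[OF this] show ?thesis by simp
qed

lemma nn_integral_mult_nn_integral:
  assumes [measurable]: "f \<in> borel_measurable M" "g \<in> borel_measurable N"
  shows "(\<integral>\<^sup>+x. f x \<partial>M) * (\<integral>\<^sup>+y. g y \<partial>N) = (\<integral>\<^sup>+x. \<integral>\<^sup>+y. f x * g y \<partial>N \<partial>M)"
  by (subst nn_integral_multc[symmetric]) (auto intro!: nn_integral_cong simp: nn_integral_cmult)

lemma nn_integral_square_le_emeasure_support:
  assumes [measurable]: "f \<in> borel_measurable M" "A \<in> sets M"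
    and vanish: "\<And>x. x \<in> space M \<Longrightarrow> x \<notin> A \<Longrightarrow> f x = 0"
  shows "(\<integral>\<^sup>+x. f x \<partial>M)\<^sup>2 \<le> emeasure M A * (\<integral>\<^sup>+x. f x ^ 2 \<partial>M)"
proof -
  have "(\<integral>\<^sup>+x. f x \<partial>M) = (\<integral>\<^sup>+x. f x * indicator A x \<partial>M)"
    by (intro nn_integral_cong) (auto simp: vanish split: split_indicator)
  also have "(\<dots>)\<^sup>2 \<le> (\<integral>\<^sup>+x. f x ^ 2 \<partial>M) * (\<integral>\<^sup>+x. indicator A x ^ 2 \<partial>M)"
    by (rule Cauchy_Schwarz_nn_integral) auto
  also have "(\<lambda>x. indicator A x ^ 2 :: ennreal) = indicator A"
    by (auto split: split_indicator)
  finally show ?thesis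
    by (simp add: mult.commute)
qed

lemma nn_integral_square_le_emeasure_support_pair:
  fixes k :: "'a::euclidean_space \<Rightarrow> 'b::euclidean_space \<Rightarrow> ennreal"
  assumes [measurable]: "(\<lambda>p. k (fst p) (snd p)) \<in> borel_measurable (borel \<Otimes>\<^sub>M borel)"
      "A \<in> sets borel" "B \<in> sets borel"
    and vanish: "\<And>u v. u \<notin> A \<or> v \<notin> B \<Longrightarrow> k u v = 0"
  shows "(\<integral>\<^sup>+u. \<integral>\<^sup>+v. k u v \<partial>lborel \<partial>lborel)\<^sup>2
    \<le> emeasure lborel A * emeasure lborel B * (\<integral>\<^sup>+u. \<integral>\<^sup>+v. k u v ^ 2 \<partial>lborel \<partial>lborel)"
proof -
  have [measurable]: "k u \<in> borel_measurable borel" for u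
    using measurable_Pair2[OF assms(1), of u] by simp
  have inner: "(\<integral>\<^sup>+v. k u v \<partial>lborel)\<^sup>2 \<le> emeasure lborel B * (\<integral>\<^sup>+v. k u v ^ 2 \<partial>lborel)" for u
    by (rule nn_integral_square_le_emeasure_support) (auto intro: vanish)
  have "k u = (\<lambda>_. 0)" if "u \<notin> A" for u
    using vanish that by auto
  then have "(\<integral>\<^sup>+u. \<integral>\<^sup>+v. k u v \<partial>lborel \<partial>lborel)\<^sup>2
      \<le> emeasure lborel A * (\<integral>\<^sup>+u. (\<integral>\<^sup>+v. k u v \<partial>lborel)\<^sup>2 \<partial>lborel)"
    by (intro nn_integral_square_le_emeasure_support) auto
  also have "(\<integral>\<^sup>+u. (\<integral>\<^sup>+v. k u v \<partial>lborel)\<^sup>2 \<partial>lborel)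
      \<le> (\<integral>\<^sup>+u. emeasure lborel B * (\<integral>\<^sup>+v. k u v ^ 2 \<partial>lborel) \<partial>lborel)"
    by (intro nn_integral_mono inner)
  also have "\<dots> = emeasure lborel B * (\<integral>\<^sup>+u. \<integral>\<^sup>+v. k u v ^ 2 \<partial>lborel \<partial>lborel)"
    by (rule nn_integral_cmult) measurable
  finally show ?thesis
    by (simp add: mult_left_mono mult.assoc)
qed

section \<open>Lines through two points of space-time\<close>

(* Lines are encoded by pairs (xi, x) as in lines_X. For s = s' both definitions degenerate
   (division by zero) to the constant line through y. *)
definition line_pos :: "real \<Rightarrow> 'a \<Rightarrow> real \<Rightarrow> 'a \<Rightarrow> real \<Rightarrow> 'a::real_vector" where
  "line_pos s y s' u r = y + ((r - s) / (s' - s)) *\<^sub>R (u - y)"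

definition line_through :: "real \<Rightarrow> 'a \<Rightarrow> real \<Rightarrow> 'a \<Rightarrow> 'a \<times> 'a::real_vector" where
  "line_through s y s' u = ((1 / (s' - s)) *\<^sub>R (u - y), y - (s / (s' - s)) *\<^sub>R (u - y))"

lemma line_pos_left [simp]: "line_pos s y s' u s = y"
  by (simp add: line_pos_def)

lemma line_pos_right [simp]: "s \<noteq> s' \<Longrightarrow> line_pos s y s' u s' = u"
  by (simp add: line_pos_def)

lemma line_pos_eq_combination:
  "line_pos s y s' u r = (1 - (r - s) / (s' - s)) *\<^sub>R y + ((r - s) / (s' - s)) *\<^sub>R u"
  by (simp add: line_pos_def algebra_simps)

lemma line_through_pos:
  "snd (line_through s y s' u) + r *\<^sub>R fst (line_through s y s' u) = line_pos s y s' u r"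
  by (simp add: line_through_def line_pos_def algebra_simps diff_divide_distrib)

lemma line_pos_line_pos:
  assumes "s \<noteq> s'"
  shows "line_pos s (line_pos s1 a s2 b s) s' (line_pos s1 a s2 b s') r = line_pos s1 a s2 b r"
proof -
  define k where "k x = (x - s1) / (s2 - s1)" for x
  have pos: "line_pos s1 a s2 b x = a + k x *\<^sub>R (b - a)" for x
    by (simp add: line_pos_def k_def)
  have "k s' - k s = (s' - s) / (s2 - s1)"
    by (simp add: k_def diff_divide_distrib)
  then have k: "k s + (r - s) / (s' - s) * (k s' - k s) = k r"
    using assms by (simp add: k_def add_divide_distrib[symmetric])
  have "(a + p *\<^sub>R d) + l *\<^sub>R ((a + q *\<^sub>R d) - (a + p *\<^sub>R d)) = a + (p + l * (q - p)) *\<^sub>R d"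
    for l p q and d :: 'a
    by (simp add: algebra_simps)
  from this[where p="k s" and l="(r - s) / (s' - s)" and q="k s'"] show ?thesis
    unfolding pos k by (simp add: line_pos_def)
qed

lemma line_pos_line_pos_right:
  "s \<noteq> s' \<Longrightarrow> s \<noteq> r \<Longrightarrow> line_pos s y r (line_pos s y s' w r) s' = w"
  using line_pos_line_pos[of s r s y s' w s'] by simp

lemma line_pos_line_pos_left:
  "s \<noteq> s' \<Longrightarrow> r \<noteq> s' \<Longrightarrow> line_pos s (line_pos s' u r w s) s' u r = w"
  using line_pos_line_pos[of s s' s' u r w r] by simp

lemma measurable_line_pos [measurable (raw)]:
  fixes f g :: "'b \<Rightarrow> 'a::euclidean_space"
  assumes [measurable]: "f \<in> borel_measurable M" "g \<in> borel_measurable M"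
  shows "(\<lambda>x. line_pos s (f x) s' (g x) r) \<in> borel_measurable M"
  unfolding line_pos_def by measurable

lemma measurable_line_through [measurable (raw)]:
  fixes f g :: "'b \<Rightarrow> 'a::euclidean_space"
  assumes [measurable]: "f \<in> borel_measurable M" "g \<in> borel_measurable M"
  shows "(\<lambda>x. line_through s (f x) s' (g x)) \<in> M \<rightarrow>\<^sub>M borel \<Otimes>\<^sub>M borel"
  unfolding line_through_def by measurable

lemma nn_integral_line_pos_subst:
  fixes f :: "'a::euclidean_space \<Rightarrow> ennreal"
  assumes [measurable]: "f \<in> borel_measurable borel" and "s' \<noteq> s" "r \<noteq> s"
  shows "(\<integral>\<^sup>+u. f u \<partial>lborel)
    = ennreal (\<bar>(r - s) / (s' - s)\<bar> ^ DIM('a)) * (\<integral>\<^sup>+w. f (line_pos s y s' w r) \<partial>lborel)"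
proof -
  have "line_pos s y s' w r = (y - ((r - s) / (s' - s)) *\<^sub>R y) + ((r - s) / (s' - s)) *\<^sub>R w" for w
    by (simp add: line_pos_def algebra_simps)
  then show ?thesis
    using assms by (simp only:) (rule nn_integral_lborel_affine, auto)
qed

(* The coefficients (t_inf - t1)/(t_inf - t0), (t2 - t0)/(t2 - t1) and (t2' - t1')/(t2' - t0) of y
   in the three steps multiply to 1 by the cross-ratio condition. *)
lemma line_pos_closing_translate:
  fixes y \<alpha> \<beta> \<gamma> :: "'a::real_vector"
  assumes "tinf \<noteq> t0" "t2 \<noteq> t1" "t2' \<noteq> t0"
    and cross: "(t2' - t1') * (t2 - t0) * (tinf - t1) = (t2' - t0) * (t2 - t1) * (tinf - t0)"
  shows "line_pos t0 (line_pos t1 (line_pos t0 y tinf \<alpha> t1) t2 \<beta> t0) t2' \<gamma> t1'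
    = y + line_pos t0 (line_pos t1 (line_pos t0 0 tinf \<alpha> t1) t2 \<beta> t0) t2' \<gamma> t1'"
proof -
  have "1 - (t1' - t0) / (t2' - t0) = (t2' - t1') / (t2' - t0)"
    "1 - (t0 - t1) / (t2 - t1) = (t2 - t0) / (t2 - t1)"
    "1 - (t1 - t0) / (tinf - t0) = (tinf - t1) / (tinf - t0)"
    using assms by (simp_all add: field_simps)
  then have "(1 - (t1' - t0) / (t2' - t0)) * (1 - (t0 - t1) / (t2 - t1)) * (1 - (t1 - t0) / (tinf - t0)) = 1"
    using assms by (simp add: cross)
  moreover have "(1 - c) *\<^sub>R ((1 - b) *\<^sub>R ((1 - a) *\<^sub>R y + a *\<^sub>R \<alpha>) + b *\<^sub>R \<beta>) + c *\<^sub>R \<gamma>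
      = ((1 - c) * (1 - b) * (1 - a)) *\<^sub>R y
        + ((1 - c) *\<^sub>R ((1 - b) *\<^sub>R ((1 - a) *\<^sub>R 0 + a *\<^sub>R \<alpha>) + b *\<^sub>R \<beta>) + c *\<^sub>R \<gamma>)"
    for a b c :: real
    by (simp add: algebra_simps)
  ultimately show ?thesis
    by (simp add: line_pos_eq_combination)
qed

lemma cross_ratio_condition:
  fixes t0 t1 t1' t2 t2' tinf :: real
  assumes "tinf \<noteq> t0" "tinf \<noteq> t1" "tinf \<noteq> t2" "t1' \<noteq> t0" "t2' \<noteq> t0"
    and "((tinf - t0) * (t1 - t0)) / ((t1 - tinf) * (t1' - t0))
      = ((tinf - t0) * (t2 - t0)) / ((t2 - tinf) * (t2' - t0))"
  shows "(t2' - t1') * (t2 - t0) * (tinf - t1) = (t2' - t0) * (t2 - t1) * (tinf - t0)"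
proof -
  have "(tinf - t0) * ((t1 - t0) * (t2 - tinf) * (t2' - t0)) = (tinf - t0) * ((t2 - t0) * (t1 - tinf) * (t1' - t0))"
    using assms by (simp add: frac_eq_eq mult_ac)
  then have "(t1 - t0) * (t2 - tinf) * (t2' - t0) = (t2 - t0) * (t1 - tinf) * (t1' - t0)"
    using assms(1) by simp
  then show ?thesis
    by algebra
qed

lemma Dcoef_quadrilateral:
  assumes "t1 \<noteq> t0" "t1' \<noteq> t0" "tinf \<noteq> t0" "t2 \<noteq> t1" "t2' \<noteq> t0"
  shows "((\<bar>1 / (t1 - t0)\<bar> * \<bar>1 / (t1' - t0)\<bar>) ^ n)\<^sup>2
      * (\<bar>(t1 - t0) / (tinf - t0)\<bar> * \<bar>(t0 - t1) / (t2 - t1)\<bar> * \<bar>(t1' - t0) / (t2' - t0)\<bar>) ^ n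
    = Dcoef n t1 t2 * Dcoef n t0 tinf * Dcoef n t1' t0 * Dcoef n t2' t0"
proof -
  have base: "(1 / p * (1 / p'))\<^sup>2 * (p / a * (p / b) * (p' / c)) = 1 / (b * a * p' * c)"
    if "p \<noteq> 0" "p' \<noteq> 0" "a \<noteq> 0" "b \<noteq> 0" "c \<noteq> 0" for p p' a b c :: real
    using that by (simp add: power2_eq_square field_simps)
  have ratio: "(\<bar>1 / (t1 - t0)\<bar> * \<bar>1 / (t1' - t0)\<bar>)\<^sup>2
      * (\<bar>(t1 - t0) / (tinf - t0)\<bar> * \<bar>(t0 - t1) / (t2 - t1)\<bar> * \<bar>(t1' - t0) / (t2' - t0)\<bar>)
    = 1 / (\<bar>t1 - t2\<bar> * \<bar>t0 - tinf\<bar> * \<bar>t1' - t0\<bar> * \<bar>t2' - t0\<bar>)"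
    unfolding abs_divide abs_one abs_minus_commute[of t0 t1] abs_minus_commute[of t1 t2]
      abs_minus_commute[of t0 tinf]
    using assms by (intro base) auto
  have pow: "((x * y) ^ n)\<^sup>2 * z ^ n = ((x * y)\<^sup>2 * z) ^ n" for x y z :: real
    by (simp add: power_mult_distrib power_mult[symmetric] mult.commute)
  show ?thesis
    unfolding pow ratio by (simp add: Dcoef_def power_one_over power_mult_distrib)
qed

section \<open>Families of lines with Borel slices\<close>

(* S plays the role of G_X, Q t of a Borel set containing pi_t(G), and M of M(G). *)
locale line_family =
  fixes S :: "('a::euclidean_space \<times> 'a) set" and Q :: "real \<Rightarrow> 'a set" and M :: ennreal
  assumes S_borel: "S \<in> sets borel"
    and Q_borel [measurable]: "\<And>t. Q t \<in> sets borel"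
    and in_slices: "\<And>\<xi> x t. (\<xi>, x) \<in> S \<Longrightarrow> x + t *\<^sub>R \<xi> \<in> Q t"
    and fibre_le: "\<And>\<xi>. emeasure lborel {x. (\<xi>, x) \<in> S} \<le> M"
begin

lemma S_pair_borel [measurable]: "S \<in> sets (borel \<Otimes>\<^sub>M borel)"
  using S_borel unfolding borel_prod .

lemma line_through_in_slices: "line_through s y s' u \<in> S \<Longrightarrow> line_pos s y s' u r \<in> Q r"
  using in_slices[of "fst (line_through s y s' u)" "snd (line_through s y s' u)" r]
  by (simp add: line_through_pos)

lemma indicator_line_through_le:
  "indicator S (line_through s y s' u) \<le> (indicator (Q r) (line_pos s y s' u r) :: ennreal)"
  using line_through_in_slices by (auto split: split_indicator)

lemma nn_integral_fibre_le: "(\<integral>\<^sup>+x. indicator S (\<xi>, x - c) \<partial>lborel) \<le> M"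
proof -
  have [measurable]: "{x. (\<xi>, x) \<in> S} \<in> sets borel"
    by measurable
  have "emeasure lborel {x. (\<xi>, x) \<in> S} = (\<integral>\<^sup>+x. indicator {x. (\<xi>, x) \<in> S} x \<partial>lborel)"
    by simp
  also have "\<dots> = (\<integral>\<^sup>+x. indicator {x. (\<xi>, x) \<in> S} (- c + x) \<partial>lborel)"
    by (rule nn_integral_lborel_translate) measurable
  also have "\<dots> = (\<integral>\<^sup>+x. indicator S (\<xi>, x - c) \<partial>lborel)"
    by (simp add: indicator_def algebra_simps)
  finally show ?thesis
    using fibre_le by metis
qed

definition pencil :: "real \<Rightarrow> 'a \<Rightarrow> ennreal" where
  "pencil t y = (\<integral>\<^sup>+\<xi>. indicator S (\<xi>, y - t *\<^sub>R \<xi>) \<partial>lborel)"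

lemma pencil_measurable [measurable]: "pencil t \<in> borel_measurable borel"
  unfolding pencil_def by measurable

lemma emeasure_eq_nn_integral_pencil: "emeasure lborel S = (\<integral>\<^sup>+y. pencil t y \<partial>lborel)"
proof -
  have shift: "(\<integral>\<^sup>+x. indicator S (\<xi>, x) \<partial>lborel) = (\<integral>\<^sup>+y. indicator S (\<xi>, y - t *\<^sub>R \<xi>) \<partial>lborel)"
    for \<xi>
  proof -
    have "(\<integral>\<^sup>+x. indicator S (\<xi>, x) \<partial>lborel) = (\<integral>\<^sup>+y. indicator S (\<xi>, - t *\<^sub>R \<xi> + y) \<partial>lborel)"
      by (rule nn_integral_lborel_translate) measurable
    then show ?thesis
      by (simp add: algebra_simps)
  qed
  have "emeasure lborel S = (\<integral>\<^sup>+\<xi>. \<integral>\<^sup>+x. indicator S (\<xi>, x) \<partial>lborel \<partial>lborel)"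
    by (simp add: lborel_prod[symmetric] lborel.emeasure_pair_measure)
  also have "\<dots> = (\<integral>\<^sup>+\<xi>. \<integral>\<^sup>+y. indicator S (\<xi>, y - t *\<^sub>R \<xi>) \<partial>lborel \<partial>lborel)"
    by (simp only: shift)
  also have "\<dots> = (\<integral>\<^sup>+y. pencil t y \<partial>lborel)"
    unfolding pencil_def by (rule lborel_nn_integral_swap) measurable
  finally show ?thesis .
qed

lemma pencil_outside:
  assumes "y \<notin> Q t"
  shows "pencil t y = 0"
proof -
  have "(\<xi>, y - t *\<^sub>R \<xi>) \<notin> S" for \<xi>
    using in_slices[of \<xi> "y - t *\<^sub>R \<xi>" t] assms by auto
  then show ?thesis
    by (simp add: pencil_def)
qed

lemma pencil_eq:
  assumes "s \<noteq> t"
  shows "pencil t y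
    = ennreal (\<bar>1 / (s - t)\<bar> ^ DIM('a)) * (\<integral>\<^sup>+u. indicator S (line_through t y s u) \<partial>lborel)"
  unfolding pencil_def using assms
  by (subst nn_integral_lborel_affine[where c="1 / (s - t)" and t="- (1 / (s - t)) *\<^sub>R y"])
     (auto simp: line_through_def algebra_simps)

definition line_pair :: "real \<Rightarrow> real \<Rightarrow> real \<Rightarrow> 'a \<Rightarrow> 'a \<Rightarrow> 'a \<Rightarrow> ennreal" where
  "line_pair t s s' y u v = indicator S (line_through t y s u) * indicator S (line_through t y s' v)"

lemma measurable_line_pair [measurable (raw)]:
  assumes [measurable]: "f \<in> borel_measurable N" "g \<in> borel_measurable N" "h \<in> borel_measurable N"
  shows "(\<lambda>x. line_pair t s s' (f x) (g x) (h x)) \<in> borel_measurable N"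
  unfolding line_pair_def by measurable

lemma emeasure_square_le_line_pairs:
  assumes "s \<noteq> t" "s' \<noteq> t"
  shows "emeasure lborel S ^ 2 \<le> emeasure lborel (Q t) * ennreal ((\<bar>1 / (s - t)\<bar> * \<bar>1 / (s' - t)\<bar>) ^ DIM('a))
    * (\<integral>\<^sup>+u. \<integral>\<^sup>+v. \<integral>\<^sup>+y. line_pair t s s' y u v \<partial>lborel \<partial>lborel \<partial>lborel)"
proof -
  have pencil_square: "pencil t y ^ 2 = ennreal ((\<bar>1 / (s - t)\<bar> * \<bar>1 / (s' - t)\<bar>) ^ DIM('a))
      * (\<integral>\<^sup>+u. \<integral>\<^sup>+v. line_pair t s s' y u v \<partial>lborel \<partial>lborel)" for y
  proof -
    have "pencil t y ^ 2 = (ennreal (\<bar>1 / (s - t)\<bar> ^ DIM('a)) * (\<integral>\<^sup>+u. indicator S (line_through t y s u) \<partial>lborel))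
        * (ennreal (\<bar>1 / (s' - t)\<bar> ^ DIM('a)) * (\<integral>\<^sup>+v. indicator S (line_through t y s' v) \<partial>lborel))"
      unfolding power2_eq_square by (intro arg_cong2[where f=times] pencil_eq assms)
    moreover have "ennreal ((\<bar>1 / (s - t)\<bar> * \<bar>1 / (s' - t)\<bar>) ^ DIM('a))
        = ennreal (\<bar>1 / (s - t)\<bar> ^ DIM('a)) * ennreal (\<bar>1 / (s' - t)\<bar> ^ DIM('a))"
      by (subst ennreal_mult[symmetric]) (auto simp flip: power_mult_distrib)
    ultimately show ?thesis
      by (simp add: line_pair_def nn_integral_mult_nn_integral mult_ac)
  qed
  have "emeasure lborel S ^ 2 \<le> emeasure lborel (Q t) * (\<integral>\<^sup>+y. pencil t y ^ 2 \<partial>lborel)"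
    unfolding emeasure_eq_nn_integral_pencil[of t]
    by (rule nn_integral_square_le_emeasure_support) (auto simp: pencil_outside)
  also have "(\<integral>\<^sup>+y. pencil t y ^ 2 \<partial>lborel) = ennreal ((\<bar>1 / (s - t)\<bar> * \<bar>1 / (s' - t)\<bar>) ^ DIM('a))
      * (\<integral>\<^sup>+y. \<integral>\<^sup>+u. \<integral>\<^sup>+v. line_pair t s s' y u v \<partial>lborel \<partial>lborel \<partial>lborel)"
    unfolding pencil_square by (rule nn_integral_cmult) measurable
  also have "(\<integral>\<^sup>+y. \<integral>\<^sup>+u. \<integral>\<^sup>+v. line_pair t s s' y u v \<partial>lborel \<partial>lborel \<partial>lborel)
      = (\<integral>\<^sup>+u. \<integral>\<^sup>+y. \<integral>\<^sup>+v. line_pair t s s' y u v \<partial>lborel \<partial>lborel \<partial>lborel)"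
    by (rule lborel_nn_integral_swap) measurable
  also have "\<dots> = (\<integral>\<^sup>+u. \<integral>\<^sup>+v. \<integral>\<^sup>+y. line_pair t s s' y u v \<partial>lborel \<partial>lborel \<partial>lborel)"
    by (intro nn_integral_cong lborel_nn_integral_swap) measurable
  finally show ?thesis
    by (simp add: mult.assoc)
qed

lemma line_pair_square_le:
  assumes "s \<noteq> t" "s' \<noteq> t"
  shows "(\<integral>\<^sup>+u. \<integral>\<^sup>+v. \<integral>\<^sup>+y. line_pair t s s' y u v \<partial>lborel \<partial>lborel \<partial>lborel)\<^sup>2
    \<le> emeasure lborel (Q s) * emeasure lborel (Q s') *
      (\<integral>\<^sup>+u. \<integral>\<^sup>+v. \<integral>\<^sup>+y. \<integral>\<^sup>+z. line_pair t s s' y u v * line_pair t s s' z u v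
        \<partial>lborel \<partial>lborel \<partial>lborel \<partial>lborel)"
proof -
  have support: "line_pair t s s' y u v = 0" if "u \<notin> Q s \<or> v \<notin> Q s'" for y u v
    using that line_through_in_slices[of t y s u s] line_through_in_slices[of t y s' v s'] assms
    by (auto simp: line_pair_def split: split_indicator)
  have square: "(\<integral>\<^sup>+y. line_pair t s s' y u v \<partial>lborel) ^ 2
      = (\<integral>\<^sup>+y. \<integral>\<^sup>+z. line_pair t s s' y u v * line_pair t s s' z u v \<partial>lborel \<partial>lborel)" for u v
    unfolding power2_eq_square by (rule nn_integral_mult_nn_integral) measurable
  have "(\<integral>\<^sup>+u. \<integral>\<^sup>+v. \<integral>\<^sup>+y. line_pair t s s' y u v \<partial>lborel \<partial>lborel \<partial>lborel)\<^sup>2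
    \<le> emeasure lborel (Q s) * emeasure lborel (Q s') *
      (\<integral>\<^sup>+u. \<integral>\<^sup>+v. (\<integral>\<^sup>+y. line_pair t s s' y u v \<partial>lborel) ^ 2 \<partial>lborel \<partial>lborel)"
    by (rule nn_integral_square_le_emeasure_support_pair) (measurable, simp add: support)
  then show ?thesis
    by (simp only: square)
qed

lemma nn_integral_fibre_product_le:
  fixes A B C :: "'a set" and X :: "'a \<times> 'a \<times> 'a \<Rightarrow> 'a"
  assumes [measurable]: "A \<in> sets borel" "B \<in> sets borel" "C \<in> sets borel"
    "X \<in> borel_measurable (borel \<Otimes>\<^sub>M borel \<Otimes>\<^sub>M borel)"
  shows "(\<integral>\<^sup>+y. \<integral>\<^sup>+\<alpha>. \<integral>\<^sup>+\<beta>. \<integral>\<^sup>+\<gamma>. indicator A \<alpha> * indicator B \<beta> * indicator C \<gamma>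
      * indicator S (X (\<alpha>, \<beta>, \<gamma>), y - t *\<^sub>R X (\<alpha>, \<beta>, \<gamma>)) \<partial>lborel \<partial>lborel \<partial>lborel \<partial>lborel)
    \<le> M * (emeasure lborel A * emeasure lborel B * emeasure lborel C)"
    (is "(\<integral>\<^sup>+y. \<integral>\<^sup>+\<alpha>. \<integral>\<^sup>+\<beta>. \<integral>\<^sup>+\<gamma>. ?h y \<alpha> \<beta> \<gamma> \<partial>lborel \<partial>lborel \<partial>lborel \<partial>lborel) \<le> _")
proof -
  have "(\<integral>\<^sup>+y. \<integral>\<^sup>+\<alpha>. \<integral>\<^sup>+\<beta>. \<integral>\<^sup>+\<gamma>. ?h y \<alpha> \<beta> \<gamma> \<partial>lborel \<partial>lborel \<partial>lborel \<partial>lborel)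
      = (\<integral>\<^sup>+\<alpha>. \<integral>\<^sup>+y. \<integral>\<^sup>+\<beta>. \<integral>\<^sup>+\<gamma>. ?h y \<alpha> \<beta> \<gamma> \<partial>lborel \<partial>lborel \<partial>lborel \<partial>lborel)"
    by (rule lborel_nn_integral_swap) measurable
  also have "\<dots> = (\<integral>\<^sup>+\<alpha>. \<integral>\<^sup>+\<beta>. \<integral>\<^sup>+y. \<integral>\<^sup>+\<gamma>. ?h y \<alpha> \<beta> \<gamma> \<partial>lborel \<partial>lborel \<partial>lborel \<partial>lborel)"
    by (intro nn_integral_cong lborel_nn_integral_swap) measurable
  also have "\<dots> = (\<integral>\<^sup>+\<alpha>. \<integral>\<^sup>+\<beta>. \<integral>\<^sup>+\<gamma>. \<integral>\<^sup>+y. ?h y \<alpha> \<beta> \<gamma> \<partial>lborel \<partial>lborel \<partial>lborel \<partial>lborel)"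
    by (intro nn_integral_cong lborel_nn_integral_swap) measurable
  also have "\<dots> \<le> (\<integral>\<^sup>+\<alpha>. \<integral>\<^sup>+\<beta>. \<integral>\<^sup>+\<gamma>. M * indicator A \<alpha> * indicator B \<beta> * indicator C \<gamma>
      \<partial>lborel \<partial>lborel \<partial>lborel)"
  proof (intro nn_integral_mono)
    fix \<alpha> \<beta> \<gamma>
    have "(\<integral>\<^sup>+y. ?h y \<alpha> \<beta> \<gamma> \<partial>lborel) = indicator A \<alpha> * indicator B \<beta> * indicator C \<gamma>
        * (\<integral>\<^sup>+y. indicator S (X (\<alpha>, \<beta>, \<gamma>), y - t *\<^sub>R X (\<alpha>, \<beta>, \<gamma>)) \<partial>lborel)"
      by (rule nn_integral_cmult) measurable
    also have "\<dots> \<le> indicator A \<alpha> * indicator B \<beta> * indicator C \<gamma> * M"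
      by (intro mult_left_mono nn_integral_fibre_le) simp
    finally show "(\<integral>\<^sup>+y. ?h y \<alpha> \<beta> \<gamma> \<partial>lborel) \<le> M * indicator A \<alpha> * indicator B \<beta> * indicator C \<gamma>"
      by (simp add: mult_ac)
  qed
  also have "\<dots> = M * (emeasure lborel A * emeasure lborel B * emeasure lborel C)"
    by (simp add: nn_integral_cmult nn_integral_multc mult_ac)
  finally show ?thesis .
qed

end

locale quadrilateral = line_family S Q M for S :: "('a::euclidean_space \<times> 'a) set" and Q M +
  fixes t0 t1 t1' tinf t2 t2' :: real
  assumes t1_neq: "t1 \<noteq> t0" and t1'_neq: "t1' \<noteq> t0" and tinf_neq: "tinf \<noteq> t0"
    and t2_neq: "t2 \<noteq> t1" and t2'_neq: "t2' \<noteq> t0"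
    and cross: "(t2' - t1') * (t2 - t0) * (tinf - t1) = (t2' - t0) * (t2 - t1) * (tinf - t0)"
begin

(* Of the four sides of the quadrilateral y u z v only y v is kept; the others are relaxed to
   their points at times t_inf, t2 and t2'. *)
definition majorant :: "'a \<Rightarrow> 'a \<Rightarrow> 'a \<Rightarrow> 'a \<Rightarrow> ennreal" where
  "majorant y u z v = indicator (Q tinf) (line_pos t0 y t1 u tinf) * indicator (Q t2) (line_pos t0 z t1 u t2)
    * indicator (Q t2') (line_pos t0 z t1' v t2') * indicator S (line_through t0 y t1' v)"

lemma measurable_majorant [measurable (raw)]:
  assumes [measurable]: "f \<in> borel_measurable N" "g \<in> borel_measurable N"
    "h \<in> borel_measurable N" "k \<in> borel_measurable N"
  shows "(\<lambda>x. majorant (f x) (g x) (h x) (k x)) \<in> borel_measurable N"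
  unfolding majorant_def by measurable

lemma line_pair_product_le_majorant:
  "line_pair t0 t1 t1' y u v * line_pair t0 t1 t1' z u v \<le> majorant y u z v"
proof -
  have "line_pair t0 t1 t1' y u v * line_pair t0 t1 t1' z u v
      = indicator S (line_through t0 y t1 u) * indicator S (line_through t0 z t1 u)
        * indicator S (line_through t0 z t1' v) * indicator S (line_through t0 y t1' v)"
    by (simp add: line_pair_def mult_ac)
  also have "\<dots> \<le> majorant y u z v"
    unfolding majorant_def by (intro mult_mono indicator_line_through_le) auto
  finally show ?thesis .
qed

definition closing_point :: "'a \<Rightarrow> 'a \<Rightarrow> 'a \<Rightarrow> 'a \<Rightarrow> 'a" where
  "closing_point y \<alpha> \<beta> \<gamma> = line_pos t0 (line_pos t1 (line_pos t0 y tinf \<alpha> t1) t2 \<beta> t0) t2' \<gamma> t1'"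

definition closing_direction :: "'a \<times> 'a \<times> 'a \<Rightarrow> 'a" where
  "closing_direction = (\<lambda>(\<alpha>, \<beta>, \<gamma>). (1 / (t1' - t0)) *\<^sub>R closing_point 0 \<alpha> \<beta> \<gamma>)"

lemma closing_direction_measurable [measurable]:
  "closing_direction \<in> borel_measurable (borel \<Otimes>\<^sub>M borel \<Otimes>\<^sub>M borel)"
  unfolding closing_direction_def closing_point_def by measurable

lemma majorant_closing:
  fixes y \<alpha> \<beta> \<gamma> :: 'a
  defines "u \<equiv> line_pos t0 y tinf \<alpha> t1"
  defines "z \<equiv> line_pos t1 u t2 \<beta> t0"
  shows "majorant y u z (line_pos t0 z t2' \<gamma> t1')
    = indicator (Q tinf) \<alpha> * indicator (Q t2) \<beta> * indicator (Q t2') \<gamma>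
      * indicator S (closing_direction (\<alpha>, \<beta>, \<gamma>), y - t0 *\<^sub>R closing_direction (\<alpha>, \<beta>, \<gamma>))"
proof -
  have "line_pos t0 z t2' \<gamma> t1' = y + closing_point 0 \<alpha> \<beta> \<gamma>"
    unfolding u_def z_def closing_point_def
    by (rule line_pos_closing_translate[OF tinf_neq t2_neq t2'_neq cross])
  then have "line_through t0 y t1' (line_pos t0 z t2' \<gamma> t1')
      = (closing_direction (\<alpha>, \<beta>, \<gamma>), y - t0 *\<^sub>R closing_direction (\<alpha>, \<beta>, \<gamma>))"
    by (simp add: line_through_def closing_direction_def)
  moreover have "line_pos t0 y t1 u tinf = \<alpha>" "line_pos t0 z t1 u t2 = \<beta>"
    "line_pos t0 z t1' (line_pos t0 z t2' \<gamma> t1') t2' = \<gamma>"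
    using t1_neq t1'_neq tinf_neq t2_neq t2'_neq
    by (simp_all add: u_def z_def line_pos_line_pos_right line_pos_line_pos_left)
  ultimately show ?thesis
    by (simp add: majorant_def)
qed

lemma nn_integral_majorant:
  "(\<integral>\<^sup>+u. \<integral>\<^sup>+z. \<integral>\<^sup>+v. majorant y u z v \<partial>lborel \<partial>lborel \<partial>lborel)
    = ennreal ((\<bar>(t1 - t0) / (tinf - t0)\<bar> * \<bar>(t0 - t1) / (t2 - t1)\<bar> * \<bar>(t1' - t0) / (t2' - t0)\<bar>) ^ DIM('a))
      * (\<integral>\<^sup>+\<alpha>. \<integral>\<^sup>+\<beta>. \<integral>\<^sup>+\<gamma>. indicator (Q tinf) \<alpha> * indicator (Q t2) \<beta> * indicator (Q t2') \<gamma>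
        * indicator S (closing_direction (\<alpha>, \<beta>, \<gamma>), y - t0 *\<^sub>R closing_direction (\<alpha>, \<beta>, \<gamma>))
        \<partial>lborel \<partial>lborel \<partial>lborel)"
proof -
  define c1 where "c1 = ennreal (\<bar>(t1 - t0) / (tinf - t0)\<bar> ^ DIM('a))"
  define c2 where "c2 = ennreal (\<bar>(t0 - t1) / (t2 - t1)\<bar> ^ DIM('a))"
  define c3 where "c3 = ennreal (\<bar>(t1' - t0) / (t2' - t0)\<bar> ^ DIM('a))"
  have subst_u: "(\<integral>\<^sup>+u. \<integral>\<^sup>+z. \<integral>\<^sup>+v. majorant y u z v \<partial>lborel \<partial>lborel \<partial>lborel)
      = c1 * (\<integral>\<^sup>+\<alpha>. \<integral>\<^sup>+z. \<integral>\<^sup>+v. majorant y (line_pos t0 y tinf \<alpha> t1) z v \<partial>lborel \<partial>lborel \<partial>lborel)"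
    unfolding c1_def using t1_neq tinf_neq by (intro nn_integral_line_pos_subst) measurable
  have subst_z: "(\<integral>\<^sup>+z. \<integral>\<^sup>+v. majorant y u z v \<partial>lborel \<partial>lborel)
      = c2 * (\<integral>\<^sup>+\<beta>. \<integral>\<^sup>+v. majorant y u (line_pos t1 u t2 \<beta> t0) v \<partial>lborel \<partial>lborel)" for u
    unfolding c2_def using t1_neq t2_neq by (intro nn_integral_line_pos_subst) measurable
  have subst_v: "(\<integral>\<^sup>+v. majorant y u z v \<partial>lborel)
      = c3 * (\<integral>\<^sup>+\<gamma>. majorant y u z (line_pos t0 z t2' \<gamma> t1') \<partial>lborel)" for u z
    unfolding c3_def using t1'_neq t2'_neq by (intro nn_integral_line_pos_subst) measurable
  have "(\<integral>\<^sup>+u. \<integral>\<^sup>+z. \<integral>\<^sup>+v. majorant y u z v \<partial>lborel \<partial>lborel \<partial>lborel)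
      = c1 * (\<integral>\<^sup>+\<alpha>. c2 * (\<integral>\<^sup>+\<beta>. c3 * (\<integral>\<^sup>+\<gamma>. majorant y (line_pos t0 y tinf \<alpha> t1)
          (line_pos t1 (line_pos t0 y tinf \<alpha> t1) t2 \<beta> t0)
          (line_pos t0 (line_pos t1 (line_pos t0 y tinf \<alpha> t1) t2 \<beta> t0) t2' \<gamma> t1') \<partial>lborel)
        \<partial>lborel) \<partial>lborel)"
    by (simp only: subst_u, simp only: subst_z, simp only: subst_v)
  also have "\<dots> = c1 * c2 * c3 * (\<integral>\<^sup>+\<alpha>. \<integral>\<^sup>+\<beta>. \<integral>\<^sup>+\<gamma>. majorant y (line_pos t0 y tinf \<alpha> t1)
          (line_pos t1 (line_pos t0 y tinf \<alpha> t1) t2 \<beta> t0)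
          (line_pos t0 (line_pos t1 (line_pos t0 y tinf \<alpha> t1) t2 \<beta> t0) t2' \<gamma> t1')
        \<partial>lborel \<partial>lborel \<partial>lborel)"
    by (subst nn_integral_cmult, measurable)+ (simp add: mult.assoc)
  also have "c1 * c2 * c3
      = ennreal ((\<bar>(t1 - t0) / (tinf - t0)\<bar> * \<bar>(t0 - t1) / (t2 - t1)\<bar> * \<bar>(t1' - t0) / (t2' - t0)\<bar>) ^ DIM('a))"
    unfolding c1_def c2_def c3_def power_mult_distrib
    by (simp only: ennreal_mult[symmetric] abs_ge_zero zero_le_power mult_nonneg_nonneg)
  finally show ?thesis
    by (simp only: majorant_closing)
qed

lemma quadrilateral_integral_le:
  "(\<integral>\<^sup>+u. \<integral>\<^sup>+v. \<integral>\<^sup>+y. \<integral>\<^sup>+z. line_pair t0 t1 t1' y u v * line_pair t0 t1 t1' z u v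
      \<partial>lborel \<partial>lborel \<partial>lborel \<partial>lborel)
    \<le> ennreal ((\<bar>(t1 - t0) / (tinf - t0)\<bar> * \<bar>(t0 - t1) / (t2 - t1)\<bar> * \<bar>(t1' - t0) / (t2' - t0)\<bar>) ^ DIM('a))
      * (M * (emeasure lborel (Q tinf) * emeasure lborel (Q t2) * emeasure lborel (Q t2')))"
proof -
  have "(\<integral>\<^sup>+u. \<integral>\<^sup>+v. \<integral>\<^sup>+y. \<integral>\<^sup>+z. line_pair t0 t1 t1' y u v * line_pair t0 t1 t1' z u v
      \<partial>lborel \<partial>lborel \<partial>lborel \<partial>lborel)
    \<le> (\<integral>\<^sup>+u. \<integral>\<^sup>+v. \<integral>\<^sup>+y. \<integral>\<^sup>+z. majorant y u z v \<partial>lborel \<partial>lborel \<partial>lborel \<partial>lborel)"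
    by (intro nn_integral_mono line_pair_product_le_majorant)
  also have "\<dots> = (\<integral>\<^sup>+u. \<integral>\<^sup>+y. \<integral>\<^sup>+v. \<integral>\<^sup>+z. majorant y u z v \<partial>lborel \<partial>lborel \<partial>lborel \<partial>lborel)"
    by (intro nn_integral_cong lborel_nn_integral_swap) measurable
  also have "\<dots> = (\<integral>\<^sup>+y. \<integral>\<^sup>+u. \<integral>\<^sup>+v. \<integral>\<^sup>+z. majorant y u z v \<partial>lborel \<partial>lborel \<partial>lborel \<partial>lborel)"
    by (rule lborel_nn_integral_swap) measurable
  also have "\<dots> = (\<integral>\<^sup>+y. \<integral>\<^sup>+u. \<integral>\<^sup>+z. \<integral>\<^sup>+v. majorant y u z v \<partial>lborel \<partial>lborel \<partial>lborel \<partial>lborel)"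
    by (intro nn_integral_cong lborel_nn_integral_swap) measurable
  also have "\<dots> = ennreal ((\<bar>(t1 - t0) / (tinf - t0)\<bar> * \<bar>(t0 - t1) / (t2 - t1)\<bar> * \<bar>(t1' - t0) / (t2' - t0)\<bar>) ^ DIM('a))
      * (\<integral>\<^sup>+y. \<integral>\<^sup>+\<alpha>. \<integral>\<^sup>+\<beta>. \<integral>\<^sup>+\<gamma>. indicator (Q tinf) \<alpha> * indicator (Q t2) \<beta> * indicator (Q t2') \<gamma>
        * indicator S (closing_direction (\<alpha>, \<beta>, \<gamma>), y - t0 *\<^sub>R closing_direction (\<alpha>, \<beta>, \<gamma>))
        \<partial>lborel \<partial>lborel \<partial>lborel \<partial>lborel)"
    unfolding nn_integral_majorant by (rule nn_integral_cmult) measurable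
  also have "\<dots> \<le> ennreal ((\<bar>(t1 - t0) / (tinf - t0)\<bar> * \<bar>(t0 - t1) / (t2 - t1)\<bar> * \<bar>(t1' - t0) / (t2' - t0)\<bar>) ^ DIM('a))
      * (M * (emeasure lborel (Q tinf) * emeasure lborel (Q t2) * emeasure lborel (Q t2')))"
    by (intro mult_left_mono nn_integral_fibre_product_le) auto
  finally show ?thesis .
qed

theorem emeasure_pow4_le:
  "emeasure lborel S ^ 4 \<le> ennreal (Dcoef DIM('a) t1 t2 * Dcoef DIM('a) t0 tinf * Dcoef DIM('a) t1' t0 * Dcoef DIM('a) t2' t0)
    * M * (emeasure lborel (Q t0) ^ 2 * emeasure lborel (Q t1) * emeasure lborel (Q t1')
      * emeasure lborel (Q tinf) * emeasure lborel (Q t2) * emeasure lborel (Q t2'))"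
proof -
  define K where "K = (\<bar>1 / (t1 - t0)\<bar> * \<bar>1 / (t1' - t0)\<bar>) ^ DIM('a)"
  define J where "J = (\<bar>(t1 - t0) / (tinf - t0)\<bar> * \<bar>(t0 - t1) / (t2 - t1)\<bar> * \<bar>(t1' - t0) / (t2' - t0)\<bar>) ^ DIM('a)"
  define T where "T = (\<integral>\<^sup>+u. \<integral>\<^sup>+v. \<integral>\<^sup>+y. line_pair t0 t1 t1' y u v \<partial>lborel \<partial>lborel \<partial>lborel)"
  have "emeasure lborel S ^ 4 = (emeasure lborel S ^ 2)\<^sup>2"
    by simp
  also have "\<dots> \<le> (emeasure lborel (Q t0) * ennreal K * T)\<^sup>2"
    unfolding K_def T_def by (intro power_mono emeasure_square_le_line_pairs t1_neq t1'_neq) simp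
  also have "\<dots> = (emeasure lborel (Q t0) * ennreal K)\<^sup>2 * T\<^sup>2"
    by (simp add: power_mult_distrib)
  also have "\<dots> \<le> (emeasure lborel (Q t0) * ennreal K)\<^sup>2 * (emeasure lborel (Q t1) * emeasure lborel (Q t1')
      * (ennreal J * (M * (emeasure lborel (Q tinf) * emeasure lborel (Q t2) * emeasure lborel (Q t2')))))"
    unfolding T_def J_def
    by (intro mult_left_mono order.trans[OF line_pair_square_le] quadrilateral_integral_le t1_neq t1'_neq) auto
  also have "\<dots> = ennreal (K\<^sup>2 * J) * M * (emeasure lborel (Q t0) ^ 2 * emeasure lborel (Q t1) * emeasure lborel (Q t1')
      * emeasure lborel (Q tinf) * emeasure lborel (Q t2) * emeasure lborel (Q t2'))"
    by (simp add: K_def J_def ennreal_mult ennreal_power power_mult_distrib mult_ac)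
  also have "K\<^sup>2 * J = Dcoef DIM('a) t1 t2 * Dcoef DIM('a) t0 tinf * Dcoef DIM('a) t1' t0 * Dcoef DIM('a) t2' t0"
    unfolding K_def J_def by (rule Dcoef_quadrilateral[OF t1_neq t1'_neq tinf_neq t2_neq t2'_neq])
  finally show ?thesis .
qed

lemma measure_pow4_le:
  assumes S: "emeasure lborel S = ennreal s" and M: "M = ennreal m"
    and Q: "\<And>t. t \<in> {tinf, t0, t1, t1', t2, t2'} \<Longrightarrow> emeasure lborel (Q t) \<le> ennreal P"
    and nonneg: "0 \<le> s" "0 \<le> m" "0 \<le> P"
  shows "s ^ 4 \<le> Dcoef DIM('a) t1 t2 * Dcoef DIM('a) t0 tinf * Dcoef DIM('a) t1' t0 * Dcoef DIM('a) t2' t0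
    * m * P ^ 7"
proof -
  define D where "D = Dcoef DIM('a) t1 t2 * Dcoef DIM('a) t0 tinf * Dcoef DIM('a) t1' t0 * Dcoef DIM('a) t2' t0"
  have "0 \<le> D"
    by (simp add: D_def Dcoef_def)
  have "ennreal (s ^ 4) = emeasure lborel S ^ 4"
    using nonneg by (simp add: S ennreal_power)
  also have "\<dots> \<le> ennreal D * M * (emeasure lborel (Q t0) ^ 2 * emeasure lborel (Q t1)
      * emeasure lborel (Q t1') * emeasure lborel (Q tinf) * emeasure lborel (Q t2) * emeasure lborel (Q t2'))"
    unfolding D_def by (rule emeasure_pow4_le)
  also have "\<dots> \<le> ennreal D * ennreal m
      * (ennreal P ^ 2 * ennreal P * ennreal P * ennreal P * ennreal P * ennreal P)"
    unfolding M by (intro mult_left_mono mult_mono power_mono Q) simp_all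
  also have "\<dots> = ennreal D * ennreal m * ennreal P ^ 7"
    by (simp add: eval_nat_numeral mult.assoc)
  also have "\<dots> = ennreal (D * m * P ^ 7)"
    using \<open>0 \<le> D\<close> nonneg by (simp add: ennreal_mult ennreal_power)
  finally show ?thesis
    using \<open>0 \<le> D\<close> nonneg by (simp add: D_def ennreal_le_iff)
qed

end

section \<open>Sets of lines\<close>

lemma proj_line_eq:
  assumes "is_line g" and p: "(x, 0) \<in> g" and q: "(x + \<xi>, 1) \<in> g"
  shows "proj_line t g = x + t *\<^sub>R \<xi>"
proof -
  have aff: "affine g" and dim: "aff_dim g = 1"
    using assms(1) unfolding is_line_def by auto
  have "affine hull {(x, 0), (x + \<xi>, 1)} \<subseteq> g"
    using p q aff by (intro hull_minimal) auto
  moreover have "aff_dim (affine hull {(x, 0::real), (x + \<xi>, 1)}) = aff_dim g"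
    using dim by (simp add: aff_dim_affine_hull)
  ultimately have g: "g = affine hull {(x, 0), (x + \<xi>, 1)}"
    by (intro affine_dim_equal[OF affine_affine_hull aff, symmetric]) auto
  have "(x + t *\<^sub>R \<xi>, t) = (1 - t) *\<^sub>R (x, 0) + t *\<^sub>R (x + \<xi>, 1)"
    by (simp add: algebra_simps)
  then have "(x + t *\<^sub>R \<xi>, t) \<in> g"
    unfolding g affine_hull_2 by (intro CollectI exI[of _ "1 - t"] exI[of _ t]) simp
  moreover have "x' = x + t *\<^sub>R \<xi>" if mem: "(x', t) \<in> g" for x'
  proof -
    obtain u v where uv: "u + v = 1" "(x', t) = u *\<^sub>R (x, 0) + v *\<^sub>R (x + \<xi>, 1)"
      using mem unfolding g affine_hull_2 by blast
    then have "v = t" "u = 1 - t"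
      by auto
    with uv show ?thesis
      by (simp add: algebra_simps)
  qed
  ultimately show ?thesis
    unfolding proj_line_def by (rule the_equality)
qed

lemma lines_X_in_proj_lines:
  assumes "set_of_lines G" "(\<xi>, x) \<in> lines_X G"
  shows "x + t *\<^sub>R \<xi> \<in> proj_lines t G"
proof -
  obtain g where "g \<in> G" "(x, 0) \<in> g" "(x + \<xi>, 1) \<in> g"
    using assms(2) unfolding lines_X_def by auto
  with assms(1) show ?thesis
    unfolding proj_lines_def set_of_lines_def by (metis image_eqI proj_line_eq)
qed

lemma line_family_of_lines:
  fixes G :: "((real^'n) \<times> real) set set"
  assumes G: "set_of_lines G" and X: "lines_X G \<in> sets lebesgue"
    and F: "\<And>\<xi>. lines_fibre G \<xi> \<in> sets lebesgue" and P: "\<And>t. proj_lines t G \<in> sets lebesgue"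
  obtains S :: "((real^'n) \<times> (real^'n)) set" and Q :: "real \<Rightarrow> (real^'n) set"
  where "line_family S Q (lines_M_ennreal G)"
    and "emeasure lborel S = emeasure lebesgue (lines_X G)"
    and "\<And>t. emeasure lborel (Q t) = emeasure lebesgue (proj_lines t G)"
proof -
  define S where "S = main_part lborel (lines_X G)"
  have S: "S \<in> sets borel" "emeasure lborel S = emeasure lebesgue (lines_X G)"
    using main_part_sets[OF X] X unfolding S_def by auto
  have S_sub: "S \<subseteq> lines_X G"
    using main_part_null_part_Un[OF X] unfolding S_def by blast
  have "\<exists>B. B \<in> sets borel \<and> proj_lines t G \<subseteq> B \<and> emeasure lborel B = emeasure lebesgue (proj_lines t G)"
    for t
    using completion_upper[OF P[of t]] by (metis sets_lborel)
  then obtain Q where Q: "\<And>t. Q t \<in> sets borel" "\<And>t. proj_lines t G \<subseteq> Q t"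
    "\<And>t. emeasure lborel (Q t) = emeasure lebesgue (proj_lines t G)"
    by metis
  have "line_family S Q (lines_M_ennreal G)"
  proof
    show "x + t *\<^sub>R \<xi> \<in> Q t" if "(\<xi>, x) \<in> S" for \<xi> x t
      using that S_sub Q(2) lines_X_in_proj_lines[OF G] by blast
    fix \<xi>
    have [measurable]: "{x. (\<xi>, x) \<in> S} \<in> sets borel"
      using S(1) unfolding borel_prod[symmetric] by measurable
    have "emeasure lborel {x. (\<xi>, x) \<in> S} = emeasure lebesgue {x. (\<xi>, x) \<in> S}"
      by simp
    also have "\<dots> \<le> emeasure lebesgue (lines_fibre G \<xi>)"
      using F S_sub by (intro emeasure_mono) (auto simp: lines_fibre_def)
    also have "\<dots> \<le> lines_M_ennreal G"
      unfolding lines_M_ennreal_def by (rule SUP_upper) simp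
    finally show "emeasure lborel {x. (\<xi>, x) \<in> S} \<le> lines_M_ennreal G" .
  qed (use S Q in auto)
  from that[OF this S(2) Q(3)] show ?thesis .
qed

lemma lines_size_pow4_le:
  fixes G :: "((real^'n) \<times> real) set set" and t0 t1 t1' t2 t2' tinf :: real
  assumes times: "t1 \<noteq> t2" "t0 \<noteq> tinf" "t0 \<noteq> t1" "t0 \<noteq> t1'" "t0 \<noteq> t2'" "tinf \<noteq> t1" "tinf \<noteq> t2"
    and cross: "((tinf - t0) * (t1 - t0)) / ((t1 - tinf) * (t1' - t0))
      = ((tinf - t0) * (t2 - t0)) / ((t2 - tinf) * (t2' - t0))"
    and G: "set_of_lines G" and X: "lines_X G \<in> sets lebesgue" "emeasure lebesgue (lines_X G) < \<infinity>"
    and F: "\<And>\<xi>. lines_fibre G \<xi> \<in> sets lebesgue" and M: "lines_M_ennreal G < \<infinity>"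
    and P: "\<And>t. proj_lines t G \<in> sets lebesgue" "\<And>t. emeasure lebesgue (proj_lines t G) < \<infinity>"
  shows "lines_size G ^ 4 \<le> Dcoef CARD('n) t1 t2 * Dcoef CARD('n) t0 tinf * Dcoef CARD('n) t1' t0
    * Dcoef CARD('n) t2' t0 * lines_M G * (MAX t\<in>{tinf, t0, t1, t1', t2, t2'}. measure lebesgue (proj_lines t G)) ^ 7"
proof -
  obtain S :: "((real^'n) \<times> (real^'n)) set" and Q :: "real \<Rightarrow> (real^'n) set"
    where fam: "line_family S Q (lines_M_ennreal G)"
    and S: "emeasure lborel S = emeasure lebesgue (lines_X G)"
    and Q: "\<And>t. emeasure lborel (Q t) = emeasure lebesgue (proj_lines t G)"
    using line_family_of_lines[OF G X(1) F P(1)] by blast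
  have "(t2' - t1') * (t2 - t0) * (tinf - t1) = (t2' - t0) * (t2 - t1) * (tinf - t0)"
    by (rule cross_ratio_condition[OF _ _ _ _ _ cross]) (use times in auto)
  then interpret quadrilateral S Q "lines_M_ennreal G" t0 t1 t1' tinf t2 t2'
    using times by (intro quadrilateral.intro quadrilateral_axioms.intro fam) auto
  define P where "P = (MAX t\<in>{tinf, t0, t1, t1', t2, t2'}. measure lebesgue (proj_lines t G))"
  have "emeasure lborel (Q t) \<le> ennreal P" if "t \<in> {tinf, t0, t1, t1', t2, t2'}" for t
  proof -
    have "emeasure lborel (Q t) = ennreal (measure lebesgue (proj_lines t G))"
      using P(2)[of t] by (simp add: Q emeasure_eq_ennreal_measure top.not_eq_extremum)
    also have "\<dots> \<le> ennreal P"
      unfolding P_def using that by (intro ennreal_leI Max_ge) auto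
    finally show ?thesis .
  qed
  moreover have "0 \<le> P"
    unfolding P_def by (rule order_trans[OF measure_nonneg Max_ge]) auto
  moreover have "emeasure lborel S = ennreal (lines_size G)"
    using X(2) by (simp add: S lines_size_def emeasure_eq_ennreal_measure)
  moreover have "lines_M_ennreal G = ennreal (lines_M G)"
    using M by (simp add: lines_M_def)
  ultimately show ?thesis
    unfolding P_def[symmetric]
    by (intro measure_pow4_le[unfolded DIM_cart DIM_real mult_1_right])
       (simp_all add: lines_size_def lines_M_def)
qed

theorem corollary4p2:
  shows "\<exists>A::real. \<forall>t1 t1' t2 t2' t0 tinf :: real.
    t1 \<noteq> t2 \<and> t0 \<noteq> tinf \<and> t0 \<noteq> t1 \<and> t0 \<noteq> t1' \<and> t0 \<noteq> t2 \<and> t0 \<noteq> t2' \<and>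
    tinf \<noteq> t1 \<and> tinf \<noteq> t2 \<and>
    ((tinf - t0) * (t1 - t0)) / ((t1 - tinf) * (t1' - t0)) =
      ((tinf - t0) * (t2 - t0)) / ((t2 - tinf) * (t2' - t0)) \<longrightarrow>
    (\<forall>G :: ((real^'n) \<times> real) set set.
       set_of_lines G \<and>
       lines_X G \<in> sets lebesgue \<and> emeasure lebesgue (lines_X G) < \<infinity> \<and>
       (\<forall>\<xi>. lines_fibre G \<xi> \<in> sets lebesgue) \<and> lines_M_ennreal G < \<infinity> \<and>
       (\<forall>t. proj_lines t G \<in> sets lebesgue \<and> emeasure lebesgue (proj_lines t G) < \<infinity>) \<longrightarrow>
       lines_size G ^ 4 \<le>
         A * Dcoef CARD('n) t1 t2 * Dcoef CARD('n) t0 tinf * Dcoef CARD('n) t1' t0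
           * Dcoef CARD('n) t2' t0 * lines_M G
           * (MAX t\<in>{tinf, t0, t1, t1', t2, t2'}. measure lebesgue (proj_lines t G)) ^ 7)"
  by (intro exI[of _ 1] allI impI, elim conjE, unfold mult_1_left) (rule lines_size_pow4_le; blast)

end
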